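(* Let $y\in\mathbb{R}^n$ and $X\in\mathbb{R}^{n\times p}$ with columns $x_1,\dots,x_p$ satisfying $\|x_j\|_2=1$ for all $j$, and let $\lambda>0$. Let $(\hat\beta_0,\hat\beta^+,\hat\beta^-,\hat\Theta)$ be a solution of the strong hierarchical lasso, respectively of the weak hierarchical lasso (both defined in the context, with the quadratic loss and no elastic net penalty). Let $\hat y=\hat\beta_0\mathbf{1}+X(\hat\beta^+-\hat\beta^-)+\frac12\sum_{j\neq k}\hat\Theta_{jk}(x_j*x_k)$ be the fitted values and define the partial residuals $$r^{(-j)}=y-\hat y+x_j(\hat\beta^+_j-\hat\beta^-_j),\qquad r^{(-jk)}=y-\hat y+(x_j*x_k)\,\frac{\hat\Theta_{jk}+\hat\Theta_{kj}}{2}.$$ Then: (Strong) for the strong hierarchical lasso there exist $\hat\alpha_1,\dots,\hat\alpha_p\ge 0$, with $\hat\alpha_j=0$ whenever $\|\hat\Theta_j\|_1<\hat\beta^+_j+\hat\beta^-_j$, such that for all $j$ and all $k\neq j$ $$\hat\beta^+_j-\hat\beta^-_j=\mathcal S\big(x_j^Tr^{(-j)},\lambda-\hat\alpha_j\big),\qquad \hat\Theta_{jk}=\frac{\mathcal S\big[(x_j*x_k)^Tr^{(-jk)},\ \lambda+\hat\alpha_j+\hat\alpha_k\big]}{\|x_j*x_k\|^2};$$ (Weak) for the weak hierarchical lasso there exist $\tilde\alpha_1,\dots,\tilde\alpha_p\ge 0$, with $\tilde\alpha_j=0$ whenever $\|\hat\Theta_j\|_1<\hat\beta^+_j+\hat\beta^-_j$,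 such that for all $j$ and all $k\ne j$ $$\hat\beta^+_j-\hat\beta^-_j=\mathcal S\big(x_j^Tr^{(-j)},\lambda-\tilde\alpha_j\big),\qquad \frac{\hat\Theta_{jk}+\hat\Theta_{kj}}{2}=\frac{\mathcal S\big[(x_j*x_k)^Tr^{(-jk)},\ \lambda+2\min\{\tilde\alpha_j,\tilde\alpha_k\}\big]}{\|x_j*x_k\|^2}.$$
   Context: $*$ denotes the elementwise product of vectors, $\mathbf 1\in\mathbb{R}^n$ the all-ones vector, and $\mathcal S(c,\lambda)=\mathrm{sign}(c)(|c|-\lambda)_+$ the soft-thresholding operator. For a matrix $\Theta\in\mathbb{R}^{p\times p}$, $\Theta_j$ denotes its $j$th row and $\|\Theta\|_1=\sum_{j\neq k}|\Theta_{jk}|$. Write $X_{i\cdot}$ for the $i$th row of $X$. The quadratic loss is $q(\beta_0,\beta,\Theta)=\frac12\sum_{i=1}^n\big(y_i-\beta_0-X_{i\cdot}\beta-\frac12X_{i\cdot}\Theta X_{i\cdot}^T\big)^2$. The strong hierarchical lasso is the problem: minimize over $\beta_0\in\mathbb{R}$, $\beta^+,\beta^-\in\mathbb{R}^p$, $\Theta\in\mathbb{R}^{p\times p}$ with $\Theta_{jj}=0$ for all $j$, the objective $q(\beta_0,\beta^+-\beta^-,\Theta)+\lambda\mathbf 1^T(\beta^++\beta^-)+\frac{\lambda}{2}\|\Theta\|_1$ subject to $\Theta=\Theta^T$ and, for each $j=1,\dots,p$, $\|\Theta_j\|_1\le\beta^+_j+\beta^-_j$, $\beta^+_j\ge0$,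 $\beta^-_j\ge0$. The weak hierarchical lasso is the same problem without the symmetry constraint $\Theta=\Theta^T$. *)

theory Defs
  imports "HOL-Analysis.Analysis"
begin

text \<open>Observations are indexed by the finite type 'n, features by the finite type 'p.
  The design matrix is X :: real^'p^'n (n rows, p columns); column j is column j X.\<close>

definition soft_thr :: "real \<Rightarrow> real \<Rightarrow> real" where
  "soft_thr c l = sgn c * max (\<bar>c\<bar> - l) 0"

definition hprod :: "real^'n \<Rightarrow> real^'n \<Rightarrow> real^'n" where
  "hprod u v = (\<chi> i. u $ i * v $ i)"

definition ones :: "real^'n" where
  "ones = (\<chi> i. 1)"

definition quad_loss :: "real^'n \<Rightarrow> real^'p^'n \<Rightarrow> real \<Rightarrow> real^'p \<Rightarrow> real^'p^'p \<Rightarrow> real" where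
  "quad_loss y X b0 b Th =
     (1/2) * (\<Sum>i\<in>UNIV. (y $ i - b0 - (X $ i) \<bullet> b - (1/2) * ((X $ i) \<bullet> (Th *v (X $ i))))\<^sup>2)"

definition offdiag_l1 :: "real^'p^'p \<Rightarrow> real" where
  "offdiag_l1 Th = (\<Sum>j\<in>UNIV. \<Sum>k\<in>UNIV - {j}. \<bar>Th $ j $ k\<bar>)"

definition row_l1 :: "real^'p^'p \<Rightarrow> 'p \<Rightarrow> real" where
  "row_l1 Th j = (\<Sum>k\<in>UNIV. \<bar>Th $ j $ k\<bar>)"

definition hier_obj :: "real \<Rightarrow> real^'n \<Rightarrow> real^'p^'n \<Rightarrow> real \<Rightarrow> real^'p \<Rightarrow> real^'p \<Rightarrow> real^'p^'p \<Rightarrow> real" where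
  "hier_obj lam y X b0 bp bm Th =
     quad_loss y X b0 (bp - bm) Th + lam * (\<Sum>j\<in>UNIV. bp $ j + bm $ j) + (lam / 2) * offdiag_l1 Th"

definition weak_feasible :: "real^'p \<Rightarrow> real^'p \<Rightarrow> real^'p^'p \<Rightarrow> bool" where
  "weak_feasible bp bm Th \<longleftrightarrow>
     (\<forall>j. Th $ j $ j = 0) \<and>
     (\<forall>j. row_l1 Th j \<le> bp $ j + bm $ j \<and> bp $ j \<ge> 0 \<and> bm $ j \<ge> 0)"

definition strong_feasible :: "real^'p \<Rightarrow> real^'p \<Rightarrow> real^'p^'p \<Rightarrow> bool" where
  "strong_feasible bp bm Th \<longleftrightarrow> weak_feasible bp bm Th \<and> transpose Th = Th"

definition weak_hier_solution ::
  "real \<Rightarrow> real^'n \<Rightarrow> real^'p^'n \<Rightarrow> real \<Rightarrow> real^'p \<Rightarrow> real^'p \<Rightarrow> real^'p^'p \<Rightarrow> bool" where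
  "weak_hier_solution lam y X b0 bp bm Th \<longleftrightarrow>
     weak_feasible bp bm Th \<and>
     (\<forall>b0' bp' bm' Th'. weak_feasible bp' bm' Th' \<longrightarrow>
        hier_obj lam y X b0 bp bm Th \<le> hier_obj lam y X b0' bp' bm' Th')"

definition strong_hier_solution ::
  "real \<Rightarrow> real^'n \<Rightarrow> real^'p^'n \<Rightarrow> real \<Rightarrow> real^'p \<Rightarrow> real^'p \<Rightarrow> real^'p^'p \<Rightarrow> bool" where
  "strong_hier_solution lam y X b0 bp bm Th \<longleftrightarrow>
     strong_feasible bp bm Th \<and>
     (\<forall>b0' bp' bm' Th'. strong_feasible bp' bm' Th' \<longrightarrow>
        hier_obj lam y X b0 bp bm Th \<le> hier_obj lam y X b0' bp' bm' Th')"

definition fitted :: "real^'p^'n \<Rightarrow> real \<Rightarrow> real^'p \<Rightarrow> real^'p \<Rightarrow> real^'p^'p \<Rightarrow> real^'n" where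
  "fitted X b0 bp bm Th =
     b0 *\<^sub>R ones + X *v (bp - bm)
     + (1/2) *\<^sub>R (\<Sum>j\<in>UNIV. \<Sum>k\<in>UNIV - {j}. (Th $ j $ k) *\<^sub>R hprod (column j X) (column k X))"

definition res_main :: "real^'n \<Rightarrow> real^'p^'n \<Rightarrow> real \<Rightarrow> real^'p \<Rightarrow> real^'p \<Rightarrow> real^'p^'p \<Rightarrow> 'p \<Rightarrow> real^'n" where
  "res_main y X b0 bp bm Th j =
     y - fitted X b0 bp bm Th + (bp $ j - bm $ j) *\<^sub>R column j X"

definition res_int :: "real^'n \<Rightarrow> real^'p^'n \<Rightarrow> real \<Rightarrow> real^'p \<Rightarrow> real^'p \<Rightarrow> real^'p^'p \<Rightarrow> 'p \<Rightarrow> 'p \<Rightarrow> real^'n" where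
  "res_int y X b0 bp bm Th j k =
     y - fitted X b0 bp bm Th + ((Th $ j $ k + Th $ k $ j) / 2) *\<^sub>R hprod (column j X) (column k X)"

end

theory Submission
  imports Defs
begin

text \<open>At an optimum, the objective restricted to any feasible segment leaving it is a
  quadratic plus a piecewise linear function, so its one-sided derivative is nonnegative; this
  is all we use, no duality theory is needed. Main-effect directions give the lasso conditions
  for \<open>c\<^sub>j = x\<^sub>j\<^sup>T(y - \<hat>y)\<close>. An interaction direction changes
  \<open>\<parallel>\<Theta>\<^sub>j\<parallel>\<^sub>1\<close>; when the hierarchy constraint of \<open>j\<close> is tight this has to be paid for by
  moving \<open>\<beta>\<^sub>j\<close>, at marginal cost \<open>\<alpha>\<^sub>j = \<lambda> - |c\<^sub>j|\<close>. Hence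
  \<open>g\<^sub>j\<^sub>k = (x\<^sub>j * x\<^sub>k)\<^sup>T(y - \<hat>y)\<close> is a subgradient of \<open>(\<lambda> + \<alpha>\<^sub>j + \<alpha>\<^sub>k)|\<cdot>|\<close> at \<open>\<Theta>\<^sub>j\<^sub>k\<close>
  (strong case, where \<open>\<Theta>\<^sub>j\<^sub>k\<close> and \<open>\<Theta>\<^sub>k\<^sub>j\<close> move together) or of \<open>(\<lambda> + 2\<alpha>\<^sub>j)|\<cdot>|\<close> (weak case),
  and the soft-thresholding formulas are the fixed-point form of such subgradient conditions.
  Averaging \<open>\<Theta>\<^sub>j\<^sub>k\<close> and \<open>\<Theta>\<^sub>k\<^sub>j\<close> in the weak case keeps the smaller threshold.\<close>

definition abs_dir_deriv :: "real \<Rightarrow> real \<Rightarrow> real" where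
  "abs_dir_deriv x d = (if x = 0 then \<bar>d\<bar> else sgn x * d)"

lemma eventually_abs_add_scaled:
  "\<forall>\<^sub>F t in at_right 0. \<bar>x + t * d\<bar> = \<bar>x\<bar> + t * abs_dir_deriv x d"
proof -
  have lim: "((\<lambda>t. x + t * d) \<longlongrightarrow> x) (at_right 0)"
    by (auto intro!: tendsto_eq_intros)
  consider "x = 0" | "x > 0" | "x < 0" by linarith
  then show ?thesis
  proof cases
    case 1
    then show ?thesis
      by (auto simp: abs_dir_deriv_def abs_mult intro: eventually_mono[OF eventually_at_right_less])
  next
    case 2
    then show ?thesis
      using order_tendstoD(1)[OF lim, of 0] by (auto simp: abs_dir_deriv_def elim!: eventually_mono)
  next
    case 3
    then show ?thesis
      using order_tendstoD(2)[OF lim, of 0] by (auto simp: abs_dir_deriv_def elim!: eventually_mono)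
  qed
qed

lemma abs_dir_deriv_0 [simp]: "abs_dir_deriv x 0 = 0"
  by (simp add: abs_dir_deriv_def)

lemma abs_dir_deriv_if_0: "abs_dir_deriv x (if b then d else 0) = (if b then abs_dir_deriv x d else 0)"
  by simp

lemma nonneg_of_eventually_nonneg_quadratic:
  fixes A B :: real
  assumes "\<forall>\<^sub>F t in at_right 0. 0 \<le> t * A + t\<^sup>2 * B"
  shows "0 \<le> A"
proof (rule tendsto_lowerbound)
  show "((\<lambda>t. A + t * B) \<longlongrightarrow> A) (at_right 0)"
    by (auto intro!: tendsto_eq_intros)
  show "\<forall>\<^sub>F t in at_right 0. 0 \<le> A + t * B"
    using assms eventually_at_right_less
  proof eventually_elim
    case (elim t)
    then have "0 \<le> t * (A + t * B)" by (simp add: power2_eq_square algebra_simps)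
    with \<open>0 < t\<close> show ?case by (simp add: zero_le_mult_iff)
  qed
qed simp

definition model :: "real^'p^'n \<Rightarrow> real^'p \<Rightarrow> real^'p^'p \<Rightarrow> real^'n" where
  "model X b Th = (\<chi> i. (X $ i) \<bullet> b + (1/2) * ((X $ i) \<bullet> (Th *v (X $ i))))"

lemma model_add_scaled:
  "model X (b + t *\<^sub>R db) (Th + t *\<^sub>R D) = model X b Th + t *\<^sub>R model X db D"
  by (simp add: model_def vec_eq_iff matrix_vector_mult_def inner_vec_def sum.distrib
      sum_distrib_left algebra_simps)

lemma quad_loss_eq_norm:
  "quad_loss y X b0 b Th = (1/2) * (norm (y - b0 *\<^sub>R ones - model X b Th))\<^sup>2"
  by (simp add: quad_loss_def power2_norm_eq_inner inner_vec_def model_def ones_def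
      flip: power2_eq_square) (simp add: algebra_simps)

lemma half_norm_sq_diff_scaled:
  fixes r m :: "'a::real_inner"
  shows "(1/2) * (norm (r - t *\<^sub>R m))\<^sup>2 = (1/2) * (norm r)\<^sup>2 - t * (r \<bullet> m) + t\<^sup>2 * ((1/2) * (norm m)\<^sup>2)"
  unfolding power2_norm_eq_inner by (simp add: inner_diff inner_commute power2_eq_square algebra_simps)

lemma quad_loss_along_line:
  "quad_loss y X b0 (b + t *\<^sub>R db) (Th + t *\<^sub>R D)
     = quad_loss y X b0 b Th - t * ((y - b0 *\<^sub>R ones - model X b Th) \<bullet> model X db D)
       + t\<^sup>2 * ((1/2) * (norm (model X db D))\<^sup>2)"
  using half_norm_sq_diff_scaled[of "y - b0 *\<^sub>R ones - model X b Th" t "model X db D"]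
  by (simp add: quad_loss_eq_norm model_add_scaled algebra_simps)

lemma fitted_eq_model:
  assumes "\<And>j. Th $ j $ j = 0"
  shows "fitted X b0 bp bm Th = b0 *\<^sub>R ones + model X (bp - bm) Th"
proof -
  have "(\<Sum>k\<in>UNIV - {j}. Th $ j $ k * (X $ i $ j * X $ i $ k)) = (\<Sum>k\<in>UNIV. Th $ j $ k * (X $ i $ j * X $ i $ k))"
    for i j using assms by (simp add: sum_diff1)
  then show ?thesis
    by (simp add: fitted_def model_def vec_eq_iff hprod_def column_def matrix_vector_mult_def
        inner_vec_def sum_distrib_left algebra_simps)
qed

lemma inner_model:
  "r \<bullet> model X db D = (\<Sum>j\<in>UNIV. db $ j * (column j X \<bullet> r))
     + (1/2) * (\<Sum>j\<in>UNIV. \<Sum>k\<in>UNIV. D $ j $ k * (hprod (column j X) (column k X) \<bullet> r))"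
proof -
  have "r \<bullet> model X db D = (\<Sum>i\<in>UNIV. \<Sum>j\<in>UNIV. r $ i * X $ i $ j * db $ j)
      + (1/2) * (\<Sum>i\<in>UNIV. \<Sum>j\<in>UNIV. \<Sum>k\<in>UNIV. r $ i * X $ i $ j * D $ j $ k * X $ i $ k)"
    by (simp add: model_def inner_vec_def matrix_vector_mult_def sum_distrib_left sum.distrib
        algebra_simps)
  also have "(\<Sum>i\<in>UNIV. \<Sum>j\<in>UNIV. r $ i * X $ i $ j * db $ j) = (\<Sum>j\<in>UNIV. db $ j * (column j X \<bullet> r))"
    by (subst sum.swap) (simp add: inner_vec_def column_def sum_distrib_left algebra_simps)
  also have "(\<Sum>i\<in>UNIV. \<Sum>j\<in>UNIV. \<Sum>k\<in>UNIV. r $ i * X $ i $ j * D $ j $ k * X $ i $ k)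
      = (\<Sum>j\<in>UNIV. \<Sum>k\<in>UNIV. D $ j $ k * (hprod (column j X) (column k X) \<bullet> r))"
  proof -
    have "(\<Sum>i\<in>UNIV. \<Sum>j\<in>UNIV. \<Sum>k\<in>UNIV. r $ i * X $ i $ j * D $ j $ k * X $ i $ k)
        = (\<Sum>j\<in>UNIV. \<Sum>k\<in>UNIV. \<Sum>i\<in>UNIV. r $ i * X $ i $ j * D $ j $ k * X $ i $ k)"
      by (subst sum.swap) (rule sum.cong[OF refl sum.swap])
    then show ?thesis
      by (simp add: inner_vec_def column_def hprod_def sum_distrib_left algebra_simps)
  qed
  finally show ?thesis .
qed

lemma sum_axis_axis_mult:
  "(\<Sum>a\<in>UNIV. \<Sum>b\<in>UNIV. axis j (axis k s) $ a $ b * f a b) = (s::real) * f j k"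
proof -
  have "(\<Sum>b\<in>UNIV. axis j (axis k s) $ a $ b * f a b) = (if a = j then s * f j k else 0)" for a
  proof (cases "a = j")
    case True
    then show ?thesis
      using inner_axis'[of k s "\<chi> b. f a b"] by (simp add: inner_vec_def)
  next
    case False
    then show ?thesis by (simp add: axis_def)
  qed
  then show ?thesis by simp
qed

definition row_l1_dir_deriv :: "real^'p^'p \<Rightarrow> real^'p^'p \<Rightarrow> 'p \<Rightarrow> real" where
  "row_l1_dir_deriv Th D j = (\<Sum>k\<in>UNIV. abs_dir_deriv (Th $ j $ k) (D $ j $ k))"

lemma eventually_row_l1_along_line:
  "\<forall>\<^sub>F t in at_right 0. \<forall>j. row_l1 (Th + t *\<^sub>R D) j = row_l1 Th j + t * row_l1_dir_deriv Th D j"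
proof -
  have "\<forall>\<^sub>F t in at_right 0. \<forall>j k. \<bar>Th $ j $ k + t * D $ j $ k\<bar>
          = \<bar>Th $ j $ k\<bar> + t * abs_dir_deriv (Th $ j $ k) (D $ j $ k)"
    by (intro eventually_all_finite eventually_abs_add_scaled)
  then show ?thesis
    by eventually_elim (simp add: row_l1_def row_l1_dir_deriv_def sum.distrib sum_distrib_left)
qed

lemma row_l1_dir_deriv_nonneg_if_row_l1_zero:
  assumes "row_l1 Th j = 0"
  shows "row_l1_dir_deriv Th D j \<ge> 0"
proof -
  have "Th $ j $ k = 0" for k
    using assms by (simp add: row_l1_def sum_nonneg_eq_0_iff)
  then show ?thesis
    by (simp add: row_l1_dir_deriv_def abs_dir_deriv_def sum_nonneg)
qed

lemma offdiag_l1_eq_sum_row_l1: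
  assumes "\<And>j. Th $ j $ j = 0"
  shows "offdiag_l1 Th = (\<Sum>j\<in>UNIV. row_l1 Th j)"
  using assms by (simp add: offdiag_l1_def row_l1_def sum_diff1)

lemma eventually_weak_feasible_along_line:
  assumes feasible: "weak_feasible bp bm Th"
    and diag: "\<And>j. D $ j $ j = 0"
    and bp_dir: "\<And>j. dbp $ j < 0 \<Longrightarrow> 0 < bp $ j"
    and bm_dir: "\<And>j. dbm $ j < 0 \<Longrightarrow> 0 < bm $ j"
    and tight_dir: "\<And>j. row_l1 Th j = bp $ j + bm $ j \<Longrightarrow> row_l1_dir_deriv Th D j \<le> dbp $ j + dbm $ j"
  shows "\<forall>\<^sub>F t in at_right 0. weak_feasible (bp + t *\<^sub>R dbp) (bm + t *\<^sub>R dbm) (Th + t *\<^sub>R D)"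
proof -
  have lim: "((\<lambda>t. a + t * d) \<longlongrightarrow> a) (at_right 0)" for a d :: real
    by (auto intro!: tendsto_eq_intros)
  have pos: "\<forall>\<^sub>F t in at_right 0. 0 \<le> a + t * d" if "0 \<le> a" "d < 0 \<Longrightarrow> 0 < a" for a d :: real
  proof (cases "d < 0")
    case True
    then show ?thesis
      using order_tendstoD(1)[OF lim, of 0 a d] that by (auto elim: eventually_mono)
  next
    case False
    have "\<forall>\<^sub>F t in at_right 0. 0 < (t::real)" by (rule eventually_at_right_less)
    then show ?thesis
      by eventually_elim (use that False in \<open>auto intro!: add_nonneg_nonneg\<close>)
  qed
  have row: "\<forall>\<^sub>F t in at_right 0. row_l1 Th j + t * row_l1_dir_deriv Th D j \<le> bp $ j + bm $ j + t * (dbp $ j + dbm $ j)" for j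
  proof (cases "row_l1 Th j = bp $ j + bm $ j")
    case True
    have "\<forall>\<^sub>F t in at_right 0. 0 < (t::real)" by (rule eventually_at_right_less)
    then show ?thesis
      by eventually_elim (use True tight_dir[of j] in \<open>auto intro: mult_left_mono\<close>)
  next
    case False
    moreover have "row_l1 Th j \<le> bp $ j + bm $ j"
      using feasible by (simp add: weak_feasible_def)
    ultimately have "row_l1 Th j - (bp $ j + bm $ j) < 0" by simp
    from order_tendstoD(2)[OF lim this, of "row_l1_dir_deriv Th D j - (dbp $ j + dbm $ j)"]
    show ?thesis by (auto elim!: eventually_mono simp: algebra_simps)
  qed
  have "\<forall>\<^sub>F t in at_right 0. \<forall>j. 0 \<le> bp $ j + t * dbp $ j \<and> 0 \<le> bm $ j + t * dbm $ j
          \<and> row_l1 Th j + t * row_l1_dir_deriv Th D j \<le> bp $ j + bm $ j + t * (dbp $ j + dbm $ j)"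
    using feasible bp_dir bm_dir
    by (intro eventually_all_finite eventually_conj pos row) (auto simp: weak_feasible_def)
  with eventually_row_l1_along_line[of Th D] show ?thesis
    by eventually_elim (use feasible diag in \<open>auto simp: weak_feasible_def algebra_simps\<close>)
qed

definition scaled_abs_subgrad :: "real \<Rightarrow> real \<Rightarrow> real \<Rightarrow> bool" where
  "scaled_abs_subgrad L x g \<longleftrightarrow> (if x = 0 then \<bar>g\<bar> \<le> L else g = L * sgn x)"

lemma scaled_abs_subgrad_if_dir_deriv_bound:
  assumes "\<And>s. s * g \<le> abs_dir_deriv x s * L"
  shows "scaled_abs_subgrad L x g"
proof (cases "x = 0")
  case True
  then show ?thesis
    using assms[of 1] assms[of "-1"] by (simp add: scaled_abs_subgrad_def abs_dir_deriv_def abs_le_iff)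
next
  case False
  then have "sgn x * g \<le> L" "- (sgn x * g) \<le> - L"
    using assms[of "sgn x"] assms[of "- sgn x"] by (simp_all add: abs_dir_deriv_def sgn_mult_self_eq)
  then show ?thesis
    using False by (simp add: scaled_abs_subgrad_def sgn_if split: if_splits)
qed

lemma scaled_abs_subgrad_midpoint:
  assumes "scaled_abs_subgrad L1 a g" "scaled_abs_subgrad L2 b g" "0 \<le> L1" "0 \<le> L2"
  shows "scaled_abs_subgrad (min L1 L2) ((a + b) / 2) g"
  using assms by (auto simp: scaled_abs_subgrad_def sgn_if min_def split: if_splits)

text \<open>\<open>N = 0\<close> occurs for a vanishing product column \<open>x\<^sub>j * x\<^sub>k\<close>; then \<open>g = 0\<close> and
  \<open>L > 0\<close> force \<open>x = 0\<close>, matching the value of a division by zero in HOL.\<close>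

lemma soft_thr_fixed_point:
  assumes subgrad: "scaled_abs_subgrad L x g" and "0 \<le> L"
    and N: "0 < N \<or> (g = 0 \<and> 0 < L)"
  shows "x = soft_thr (g + x * N) L / N"
proof (cases "x = 0")
  case True
  then show ?thesis
    using subgrad by (simp add: scaled_abs_subgrad_def soft_thr_def)
next
  case False
  then have "g = L * sgn x" and "0 < N"
    using subgrad N by (auto simp: scaled_abs_subgrad_def sgn_if split: if_splits)
  show ?thesis
  proof (cases "0 < x")
    case True
    then have "0 < L + x * N" using \<open>0 < N\<close> \<open>0 \<le> L\<close> by (simp add: add_nonneg_pos)
    then show ?thesis using True \<open>g = L * sgn x\<close> \<open>0 \<le> L\<close> \<open>0 < N\<close> by (simp add: soft_thr_def)
  next
    case False
    then have "x * N < 0" using \<open>x \<noteq> 0\<close> \<open>0 < N\<close> by (simp add: mult_neg_pos)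
    then show ?thesis using False \<open>x \<noteq> 0\<close> \<open>g = L * sgn x\<close> \<open>0 \<le> L\<close> \<open>0 < N\<close>
      by (simp add: soft_thr_def max_def)
  qed
qed

text \<open>\<open>P\<close> is the constraint beyond weak feasibility: symmetry of \<open>\<Theta>\<close> for the strong
  hierarchical lasso, none for the weak one.\<close>

locale hier_lasso_optimum =
  fixes lam :: real and y :: "real^'n" and X :: "real^'p^'n" and b0 :: real
    and bp bm :: "real^'p" and Th :: "real^'p^'p" and P :: "real^'p^'p \<Rightarrow> bool"
  assumes lam_pos: "0 < lam"
    and feasible: "weak_feasible bp bm Th"
    and P_Th: "P Th"
    and optimal: "\<And>bp' bm' Th'. weak_feasible bp' bm' Th' \<Longrightarrow> P Th' \<Longrightarrow>
        hier_obj lam y X b0 bp bm Th \<le> hier_obj lam y X b0 bp' bm' Th'"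
begin

definition residual :: "real^'n" where
  "residual = y - fitted X b0 bp bm Th"

definition corr_main :: "'p \<Rightarrow> real" where
  "corr_main j = column j X \<bullet> residual"

definition corr_int :: "'p \<Rightarrow> 'p \<Rightarrow> real" where
  "corr_int j k = hprod (column j X) (column k X) \<bullet> residual"

definition kkt_mult :: "'p \<Rightarrow> real" where
  "kkt_mult j = (if row_l1 Th j < bp $ j + bm $ j then 0 else lam - \<bar>corr_main j\<bar>)"

lemma
  shows diag_zero: "Th $ j $ j = 0"
    and row_l1_le: "row_l1 Th j \<le> bp $ j + bm $ j"
    and bp_nonneg: "0 \<le> bp $ j"
    and bm_nonneg: "0 \<le> bm $ j"
  using feasible by (simp_all add: weak_feasible_def)

lemma corr_int_commute: "corr_int k j = corr_int j k"
  by (simp add: corr_int_def hprod_def mult.commute)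

lemma first_order_condition:
  assumes P_line: "\<And>t. P (Th + t *\<^sub>R D)"
    and feasible_line:
      "\<forall>\<^sub>F t in at_right 0. weak_feasible (bp + t *\<^sub>R dbp) (bm + t *\<^sub>R dbm) (Th + t *\<^sub>R D)"
  shows "(\<Sum>j\<in>UNIV. (dbp $ j - dbm $ j) * corr_main j)
           + (1/2) * (\<Sum>j\<in>UNIV. \<Sum>k\<in>UNIV. D $ j $ k * corr_int j k)
         \<le> lam * (\<Sum>j\<in>UNIV. dbp $ j + dbm $ j) + lam / 2 * (\<Sum>j\<in>UNIV. row_l1_dir_deriv Th D j)"
proof -
  define m where "m = model X (dbp - dbm) D"
  define A where "A = lam * (\<Sum>j\<in>UNIV. dbp $ j + dbm $ j)
    + lam / 2 * (\<Sum>j\<in>UNIV. row_l1_dir_deriv Th D j) - residual \<bullet> m"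
  have residual_eq: "residual = y - b0 *\<^sub>R ones - model X (bp - bm) Th"
    by (simp add: residual_def fitted_eq_model diag_zero algebra_simps)
  have "\<forall>\<^sub>F t in at_right 0. 0 \<le> t * A + t\<^sup>2 * ((1/2) * (norm m)\<^sup>2)"
    using feasible_line eventually_row_l1_along_line[of Th D]
  proof eventually_elim
    case (elim t)
    have "(Th + t *\<^sub>R D) $ j $ j = 0" for j
      using elim(1) by (simp add: weak_feasible_def)
    then have pen: "offdiag_l1 (Th + t *\<^sub>R D) = offdiag_l1 Th + t * (\<Sum>j\<in>UNIV. row_l1_dir_deriv Th D j)"
      using elim(2) by (simp add: offdiag_l1_eq_sum_row_l1 diag_zero sum.distrib sum_distrib_left)
    have dir: "(bp + t *\<^sub>R dbp) - (bm + t *\<^sub>R dbm) = (bp - bm) + t *\<^sub>R (dbp - dbm)"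
      by (simp add: algebra_simps)
    have "hier_obj lam y X b0 (bp + t *\<^sub>R dbp) (bm + t *\<^sub>R dbm) (Th + t *\<^sub>R D)
        = hier_obj lam y X b0 bp bm Th + t * A + t\<^sup>2 * ((1/2) * (norm m)\<^sup>2)"
      unfolding hier_obj_def dir quad_loss_along_line pen
      by (simp add: A_def m_def residual_eq sum.distrib sum_distrib_left algebra_simps)
    moreover have "hier_obj lam y X b0 bp bm Th
        \<le> hier_obj lam y X b0 (bp + t *\<^sub>R dbp) (bm + t *\<^sub>R dbm) (Th + t *\<^sub>R D)"
      using optimal elim(1) P_line by blast
    ultimately show ?case by simp
  qed
  then have "0 \<le> A" by (rule nonneg_of_eventually_nonneg_quadratic)
  then show ?thesis
    by (simp add: A_def m_def inner_model corr_main_def corr_int_def)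
qed

lemma first_order_condition_main:
  assumes "dp < 0 \<Longrightarrow> 0 < bp $ j" "dm < 0 \<Longrightarrow> 0 < bm $ j"
    and "row_l1 Th j = bp $ j + bm $ j \<Longrightarrow> 0 \<le> dp + dm"
  shows "(dp - dm) * corr_main j \<le> lam * (dp + dm)"
proof -
  have "\<forall>\<^sub>F t in at_right 0.
      weak_feasible (bp + t *\<^sub>R axis j dp) (bm + t *\<^sub>R axis j dm) (Th + t *\<^sub>R 0)"
    using assms by (intro eventually_weak_feasible_along_line[OF feasible])
      (auto simp: axis_def row_l1_dir_deriv_def split: if_splits)
  moreover have
    "((if i = j then dp else 0) - (if i = j then dm else 0)) * corr_main i
       = (if i = j then (dp - dm) * corr_main j else 0)"
    "(if i = j then dp else 0) + (if i = j then dm else 0) = (if i = j then dp + dm else 0)" for i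
    by simp_all
  ultimately show ?thesis
    using first_order_condition[of 0 "axis j dp" "axis j dm"] P_Th
    by (simp add: axis_def row_l1_dir_deriv_def)
qed

lemma
  shows abs_corr_main_le: "\<bar>corr_main j\<bar> \<le> lam"
    and corr_main_nonneg_if_bp_pos: "0 < bp $ j \<Longrightarrow> 0 \<le> corr_main j"
    and corr_main_nonpos_if_bm_pos: "0 < bm $ j \<Longrightarrow> corr_main j \<le> 0"
    and corr_main_ge_if_slack: "row_l1 Th j < bp $ j + bm $ j \<Longrightarrow> 0 < bp $ j \<Longrightarrow> lam \<le> corr_main j"
    and corr_main_le_if_slack: "row_l1 Th j < bp $ j + bm $ j \<Longrightarrow> 0 < bm $ j \<Longrightarrow> corr_main j \<le> - lam"
  using first_order_condition_main[of 1 j 0] first_order_condition_main[of 0 j 1]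
    first_order_condition_main[of "-1" j 1] first_order_condition_main[of 1 j "-1"]
    first_order_condition_main[of "-1" j 0] first_order_condition_main[of 0 j "-1"]
  by auto

lemma kkt_mult_nonneg: "0 \<le> kkt_mult j"
  using abs_corr_main_le[of j] by (simp add: kkt_mult_def)

lemma kkt_mult_eq_0_if_slack: "row_l1 Th j < bp $ j + bm $ j \<Longrightarrow> kkt_mult j = 0"
  by (simp add: kkt_mult_def)

lemma main_effect_subgrad:
  "scaled_abs_subgrad (lam - kkt_mult j) (bp $ j - bm $ j) (corr_main j)"
proof -
  note nonneg = bp_nonneg[of j] bm_nonneg[of j]
  note bounds = abs_corr_main_le[of j] corr_main_ge_if_slack[of j] corr_main_le_if_slack[of j]
  consider "bp $ j - bm $ j = 0" | "0 < bp $ j - bm $ j" | "bp $ j - bm $ j < 0"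
    by linarith
  then show ?thesis
  proof cases
    case 1
    then show ?thesis using bounds by (simp add: scaled_abs_subgrad_def kkt_mult_def)
  next
    case 2
    then have "0 < bp $ j" using nonneg by linarith
    then show ?thesis
      using 2 bounds corr_main_nonneg_if_bp_pos[of j] by (auto simp: scaled_abs_subgrad_def kkt_mult_def)
  next
    case 3
    then have "0 < bm $ j" using nonneg by linarith
    then show ?thesis
      using 3 bounds corr_main_nonpos_if_bm_pos[of j] by (auto simp: scaled_abs_subgrad_def kkt_mult_def)
  qed
qed

lemma main_effect_soft_thr:
  assumes "norm (column j X) = 1"
  shows "bp $ j - bm $ j = soft_thr (column j X \<bullet> res_main y X b0 bp bm Th j) (lam - kkt_mult j)"
proof -
  have "column j X \<bullet> res_main y X b0 bp bm Th j = corr_main j + (bp $ j - bm $ j) * 1"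
    using assms by (simp add: res_main_def corr_main_def residual_def inner_add_right
        flip: power2_norm_eq_inner)
  moreover have "0 \<le> lam - kkt_mult j"
    using abs_corr_main_le[of j] lam_pos by (simp add: kkt_mult_def)
  ultimately show ?thesis
    using soft_thr_fixed_point[OF main_effect_subgrad, of j 1] by simp
qed

lemma interaction_first_order:
  assumes P_line: "\<And>t. P (Th + t *\<^sub>R D)" and diag: "\<And>j. D $ j $ j = 0"
  shows "(1/2) * (\<Sum>j\<in>UNIV. \<Sum>k\<in>UNIV. D $ j $ k * corr_int j k)
    \<le> (\<Sum>j\<in>UNIV. (lam / 2 + kkt_mult j) * row_l1_dir_deriv Th D j)"
proof -
  define \<rho> where "\<rho> = row_l1_dir_deriv Th D"
  define tight where "tight j \<longleftrightarrow> row_l1 Th j = bp $ j + bm $ j" for j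
  define up where "up j \<longleftrightarrow> (if 0 \<le> \<rho> j then 0 \<le> corr_main j else 0 < bp $ j)" for j
  text \<open>On a tight row the change \<open>\<rho> j\<close> of the row norm is absorbed by whichever of
    \<open>\<beta>\<^sup>+\<^sub>j, \<beta>\<^sup>-\<^sub>j\<close> costs \<open>\<lambda> - |c\<^sub>j|\<close> per unit (a decrease only of a positive one).\<close>
  define dbp :: "real^'p" where "dbp = (\<chi> j. if tight j \<and> up j then \<rho> j else 0)"
  define dbm :: "real^'p" where "dbm = (\<chi> j. if tight j \<and> \<not> up j then \<rho> j else 0)"
  have bm_pos: "0 < bm $ j" if "tight j" "\<rho> j < 0" "\<not> 0 < bp $ j" for j
  proof -
    have "row_l1 Th j \<noteq> 0"
      using that(2) row_l1_dir_deriv_nonneg_if_row_l1_zero[of Th j D] by (auto simp: \<rho>_def)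
    moreover have "0 \<le> row_l1 Th j"
      by (simp add: row_l1_def sum_nonneg)
    ultimately show ?thesis using that(1,3) bp_nonneg[of j] by (simp add: tight_def)
  qed
  have cost: "lam * (dbp $ j + dbm $ j) - (dbp $ j - dbm $ j) * corr_main j = kkt_mult j * \<rho> j" for j
    using corr_main_nonneg_if_bp_pos[of j] corr_main_nonpos_if_bm_pos[of j] bm_pos[of j] row_l1_le[of j]
    by (auto simp: dbp_def dbm_def up_def tight_def kkt_mult_def abs_if algebra_simps)
  have "\<forall>\<^sub>F t in at_right 0. weak_feasible (bp + t *\<^sub>R dbp) (bm + t *\<^sub>R dbm) (Th + t *\<^sub>R D)"
    using bm_pos
    by (intro eventually_weak_feasible_along_line[OF feasible diag])
      (auto simp: dbp_def dbm_def up_def tight_def \<rho>_def split: if_splits)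
  note first_order_condition[OF P_line this]
  moreover have "(\<Sum>j\<in>UNIV. (lam / 2 + kkt_mult j) * \<rho> j) = lam / 2 * (\<Sum>j\<in>UNIV. \<rho> j)
      + lam * (\<Sum>j\<in>UNIV. dbp $ j + dbm $ j) - (\<Sum>j\<in>UNIV. (dbp $ j - dbm $ j) * corr_main j)"
    by (simp add: distrib_right sum.distrib sum_distrib_left sum_subtractf flip: cost)
      (simp add: distrib_left sum.distrib sum_distrib_left)
  ultimately show ?thesis by (simp add: \<rho>_def)
qed


lemma interaction_dir_deriv_bound_strong:
  assumes sym: "transpose Th = Th" and P_sym: "\<And>T. transpose T = T \<Longrightarrow> P T" and "j \<noteq> k"
  shows "s * corr_int j k \<le> abs_dir_deriv (Th $ j $ k) s * (lam + kkt_mult j + kkt_mult k)"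
proof -
  define D :: "real^'p^'p" where "D = axis j (axis k s) + axis k (axis j s)"
  define d where "d = abs_dir_deriv (Th $ j $ k) s"
  have Th_kj: "Th $ k $ j = Th $ j $ k"
    using sym by (metis transpose_def vec_lambda_beta)
  have "transpose (Th + t *\<^sub>R D) = Th + t *\<^sub>R D" for t
    using sym by (auto simp: D_def transpose_def vec_eq_iff axis_def)
  then have P_line: "P (Th + t *\<^sub>R D)" for t by (rule P_sym)
  have diag: "D $ m $ m = 0" for m
    using \<open>j \<noteq> k\<close> by (simp add: D_def axis_def)
  have "row_l1_dir_deriv Th D m = (if m = j \<or> m = k then d else 0)" for m
    using \<open>j \<noteq> k\<close> Th_kj by (auto simp: row_l1_dir_deriv_def D_def d_def axis_def abs_dir_deriv_if_0)
  then have "(lam / 2 + kkt_mult m) * row_l1_dir_deriv Th D m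
      = (if m = j then (lam / 2 + kkt_mult j) * d else 0)
        + (if m = k then (lam / 2 + kkt_mult k) * d else 0)" for m
    using \<open>j \<noteq> k\<close> by auto
  then have "(\<Sum>m\<in>UNIV. (lam / 2 + kkt_mult m) * row_l1_dir_deriv Th D m)
      = (lam + kkt_mult j + kkt_mult k) * d"
    by (simp add: sum.distrib algebra_simps)
  moreover have "(\<Sum>a\<in>UNIV. \<Sum>b\<in>UNIV. D $ a $ b * corr_int a b) = 2 * s * corr_int j k"
    using corr_int_commute[of j k] by (simp add: D_def distrib_right sum.distrib sum_axis_axis_mult)
  ultimately show ?thesis
    using interaction_first_order[OF P_line diag] by (simp add: d_def mult.commute)
qed

lemma interaction_dir_deriv_bound_weak:
  assumes P_all: "\<And>T. P T" and "j \<noteq> k"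
  shows "s * corr_int j k \<le> abs_dir_deriv (Th $ j $ k) s * (lam + 2 * kkt_mult j)"
proof -
  define D :: "real^'p^'p" where "D = axis j (axis k s)"
  define d where "d = abs_dir_deriv (Th $ j $ k) s"
  have diag: "D $ m $ m = 0" for m
    using \<open>j \<noteq> k\<close> by (simp add: D_def axis_def)
  have "(lam / 2 + kkt_mult m) * row_l1_dir_deriv Th D m = (if m = j then (lam / 2 + kkt_mult j) * d else 0)"
    for m by (auto simp: row_l1_dir_deriv_def D_def d_def axis_def abs_dir_deriv_if_0)
  then have "(\<Sum>m\<in>UNIV. (lam / 2 + kkt_mult m) * row_l1_dir_deriv Th D m) = (lam / 2 + kkt_mult j) * d"
    by simp
  moreover have "(\<Sum>a\<in>UNIV. \<Sum>b\<in>UNIV. D $ a $ b * corr_int a b) = s * corr_int j k"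
    by (simp add: D_def sum_axis_axis_mult)
  ultimately show ?thesis
    using interaction_first_order[OF P_all diag] by (simp add: d_def algebra_simps)
qed


lemma inner_res_int:
  "hprod (column j X) (column k X) \<bullet> res_int y X b0 bp bm Th j k
     = corr_int j k + ((Th $ j $ k + Th $ k $ j) / 2) * (norm (hprod (column j X) (column k X)))\<^sup>2"
  by (simp add: res_int_def corr_int_def residual_def inner_add_right power2_norm_eq_inner)

lemma interaction_soft_thr:
  assumes "scaled_abs_subgrad L ((Th $ j $ k + Th $ k $ j) / 2) (corr_int j k)" "0 < L"
  shows "(Th $ j $ k + Th $ k $ j) / 2
    = soft_thr (hprod (column j X) (column k X) \<bullet> res_int y X b0 bp bm Th j k) L
      / (norm (hprod (column j X) (column k X)))\<^sup>2"
proof -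
  have "0 < (norm (hprod (column j X) (column k X)))\<^sup>2 \<or> (corr_int j k = 0 \<and> 0 < L)"
    using \<open>0 < L\<close> by (auto simp: corr_int_def)
  from soft_thr_fixed_point[OF assms(1) _ this] \<open>0 < L\<close> show ?thesis
    by (simp add: inner_res_int)
qed

lemma interaction_soft_thr_strong:
  assumes sym: "transpose Th = Th" and P_sym: "\<And>T. transpose T = T \<Longrightarrow> P T" and "k \<noteq> j"
  shows "Th $ j $ k = soft_thr (hprod (column j X) (column k X) \<bullet> res_int y X b0 bp bm Th j k)
      (lam + kkt_mult j + kkt_mult k) / (norm (hprod (column j X) (column k X)))\<^sup>2"
proof -
  have "Th $ k $ j = Th $ j $ k"
    using sym by (metis transpose_def vec_lambda_beta)
  moreover have "scaled_abs_subgrad (lam + kkt_mult j + kkt_mult k) (Th $ j $ k) (corr_int j k)"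
    using interaction_dir_deriv_bound_strong[OF sym P_sym] \<open>k \<noteq> j\<close>
    by (intro scaled_abs_subgrad_if_dir_deriv_bound) auto
  moreover have "0 < lam + kkt_mult j + kkt_mult k"
    using lam_pos kkt_mult_nonneg[of j] kkt_mult_nonneg[of k] by linarith
  ultimately show ?thesis
    using interaction_soft_thr[of "lam + kkt_mult j + kkt_mult k" j k] by simp
qed

lemma interaction_soft_thr_weak:
  assumes P_all: "\<And>T. P T" and "k \<noteq> j"
  shows "(Th $ j $ k + Th $ k $ j) / 2
    = soft_thr (hprod (column j X) (column k X) \<bullet> res_int y X b0 bp bm Th j k)
        (lam + 2 * min (kkt_mult j) (kkt_mult k))
      / (norm (hprod (column j X) (column k X)))\<^sup>2"
proof -
  have "scaled_abs_subgrad (lam + 2 * kkt_mult j) (Th $ j $ k) (corr_int j k)"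
    using interaction_dir_deriv_bound_weak[OF P_all, of j k] \<open>k \<noteq> j\<close>
    by (intro scaled_abs_subgrad_if_dir_deriv_bound) auto
  moreover have "scaled_abs_subgrad (lam + 2 * kkt_mult k) (Th $ k $ j) (corr_int j k)"
    using interaction_dir_deriv_bound_weak[OF P_all, of k j] \<open>k \<noteq> j\<close>
    unfolding corr_int_commute[of j k] by (intro scaled_abs_subgrad_if_dir_deriv_bound) auto
  ultimately have "scaled_abs_subgrad (min (lam + 2 * kkt_mult j) (lam + 2 * kkt_mult k))
      ((Th $ j $ k + Th $ k $ j) / 2) (corr_int j k)"
    using lam_pos kkt_mult_nonneg[of j] kkt_mult_nonneg[of k]
    by (intro scaled_abs_subgrad_midpoint) auto
  moreover have "min (lam + 2 * kkt_mult j) (lam + 2 * kkt_mult k) = lam + 2 * min (kkt_mult j) (kkt_mult k)"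
    by (simp add: min_def)
  ultimately show ?thesis
    using interaction_soft_thr lam_pos kkt_mult_nonneg[of j] kkt_mult_nonneg[of k] by simp
qed

end

theorem mainTheorem1:
  fixes y :: "real^'n" and X :: "real^'p^'n" and lam :: real
    and b0 :: real and bp bm :: "real^'p" and Th :: "real^'p^'p"
  assumes unit_cols: "\<forall>j. norm (column j X) = 1"
    and lam_pos: "lam > 0"
  shows
    "(strong_hier_solution lam y X b0 bp bm Th \<longrightarrow>
       (\<exists>\<alpha> :: 'p \<Rightarrow> real.
          (\<forall>j. \<alpha> j \<ge> 0) \<and>
          (\<forall>j. row_l1 Th j < bp $ j + bm $ j \<longrightarrow> \<alpha> j = 0) \<and>
          (\<forall>j. bp $ j - bm $ j
                 = soft_thr (column j X \<bullet> res_main y X b0 bp bm Th j) (lam - \<alpha> j)) \<and>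
          (\<forall>j k. k \<noteq> j \<longrightarrow>
             Th $ j $ k
               = soft_thr (hprod (column j X) (column k X) \<bullet> res_int y X b0 bp bm Th j k)
                          (lam + \<alpha> j + \<alpha> k)
                 / (norm (hprod (column j X) (column k X)))\<^sup>2)))
     \<and>
     (weak_hier_solution lam y X b0 bp bm Th \<longrightarrow>
       (\<exists>\<alpha> :: 'p \<Rightarrow> real.
          (\<forall>j. \<alpha> j \<ge> 0) \<and>
          (\<forall>j. row_l1 Th j < bp $ j + bm $ j \<longrightarrow> \<alpha> j = 0) \<and>
          (\<forall>j. bp $ j - bm $ j
                 = soft_thr (column j X \<bullet> res_main y X b0 bp bm Th j) (lam - \<alpha> j)) \<and>
          (\<forall>j k. k \<noteq> j \<longrightarrow>
             (Th $ j $ k + Th $ k $ j) / 2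
               = soft_thr (hprod (column j X) (column k X) \<bullet> res_int y X b0 bp bm Th j k)
                          (lam + 2 * min (\<alpha> j) (\<alpha> k))
                 / (norm (hprod (column j X) (column k X)))\<^sup>2)))"
proof (intro conjI impI, goal_cases)
  case strong: 1
  then have sym: "transpose Th = Th"
    by (simp add: strong_hier_solution_def strong_feasible_def)
  interpret hier_lasso_optimum lam y X b0 bp bm Th "\<lambda>T. transpose T = T"
    using strong lam_pos by unfold_locales (auto simp: strong_hier_solution_def strong_feasible_def)
  show ?case
    using kkt_mult_nonneg kkt_mult_eq_0_if_slack main_effect_soft_thr unit_cols
      interaction_soft_thr_strong[OF sym]
    by (intro exI[of _ kkt_mult]) auto
next
  case weak: 2
  interpret hier_lasso_optimum lam y X b0 bp bm Th "\<lambda>T. True"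
    using weak lam_pos by unfold_locales (auto simp: weak_hier_solution_def)
  show ?case
    using kkt_mult_nonneg kkt_mult_eq_0_if_slack main_effect_soft_thr unit_cols
      interaction_soft_thr_weak
    by (intro exI[of _ kkt_mult]) auto
qed

end
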